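(* Let $n$ be a positive integer and $N=2^n$. Let $\delta,\alpha\in(0,1]$ be real numbers with $32\delta^2\le\alpha\le\delta/2$, $\alpha\ge N^{-2^{-300}}$, $\alpha\le2^{-30}$, and $$\frac{\delta}{\alpha}\log\frac{1}{2\alpha}\ge400\log N\cdot\log(8\log N).$$ Then there exists a set $A\subseteq\mathbb{Z}_2^n$ such that $\delta N\le|A|\le8\delta N$, $|\mathcal{R}_\alpha(A)|\ge\frac{\delta}{8\alpha^2}$ and $T_2(\mathcal{R}_\alpha(A))\le\frac{16\delta}{\alpha^4}$.
   Context: $\mathbb{Z}_2^n=(\mathbb{Z}/2\mathbb{Z})^n$ with inner product $\langle\vec x,\vec y\rangle=x_1y_1+\dots+x_ny_n\pmod 2$; $\log$ is the logarithm to base $2$. For $f:\mathbb{Z}_2^n\to\mathbb{C}$, $\widehat f(\vec r)=\sum_{\vec x}(-1)^{\langle\vec r,\vec x\rangle}f(\vec x)$; $A(\vec x)$ is the indicator of $A$, and $\mathcal{R}_\alpha(A)=\{\vec r:|\widehat A(\vec r)|\ge\alpha N\}$. For $B\subseteq\mathbb{Z}_2^n$, $T_2(B)=|\{(r_1,r_2,r_3,r_4)\in B^4: r_1+r_2=r_3+r_4\}|$. *)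

theory Defs
  imports "HOL-Analysis.Analysis"
begin

text \<open>Elements of Z_2^n are modelled as functions nat => bool vanishing outside {..<n};
  the i-th coordinate of x is x i (True = 1).\<close>

definition cube :: "nat \<Rightarrow> (nat \<Rightarrow> bool) set" where
  "cube n = {x. \<forall>i. n \<le> i \<longrightarrow> \<not> x i}"

definition vadd :: "(nat \<Rightarrow> bool) \<Rightarrow> (nat \<Rightarrow> bool) \<Rightarrow> (nat \<Rightarrow> bool)" where
  "vadd x y = (\<lambda>i. x i \<noteq> y i)"

definition ip :: "nat \<Rightarrow> (nat \<Rightarrow> bool) \<Rightarrow> (nat \<Rightarrow> bool) \<Rightarrow> nat" where
  "ip n r x = card {i. i < n \<and> r i \<and> x i} mod 2"

definition fourier_ind :: "nat \<Rightarrow> (nat \<Rightarrow> bool) set \<Rightarrow> (nat \<Rightarrow> bool) \<Rightarrow> real" where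
  "fourier_ind n A r = (\<Sum>x\<in>cube n. (-1) ^ ip n r x * (if x \<in> A then 1 else 0))"

definition large_spec :: "nat \<Rightarrow> real \<Rightarrow> (nat \<Rightarrow> bool) set \<Rightarrow> (nat \<Rightarrow> bool) set" where
  "large_spec n \<alpha> A = {r \<in> cube n. \<bar>fourier_ind n A r\<bar> \<ge> \<alpha> * 2 ^ n}"

definition T2 :: "(nat \<Rightarrow> bool) set \<Rightarrow> nat" where
  "T2 B = card {(r1, r2, r3, r4). r1 \<in> B \<and> r2 \<in> B \<and> r3 \<in> B \<and> r4 \<in> B \<and>
                  vadd r1 r2 = vadd r3 r4}"

end

theory Submission
  imports Defs "HOL-Library.Z2" "HOL-Computational_Algebra.Polynomial"
begin

text \<open>Split \<open>\<int>\<^sub>2\<^sup>n\<close> into the first \<open>t\<close> coordinates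
  and the rest, and attach to every \<open>j \<in> \<int>\<^sub>2\<^sup>t\<close> a \<open>d\<close>-dimensional subspace \<open>W\<^sub>j\<close> of the
  remaining coordinates, such that distinct \<open>W\<^sub>j\<close> meet only in \<open>0\<close>.  Let \<open>A\<close> consist of the \<open>x\<close>
  orthogonal to \<open>W\<^sub>j\<close>, where \<open>j\<close> is the low part of \<open>x\<close>.  Then \<open>|A| = N / 2\<^sup>d\<close>, and
  \<open>|\<hat>A(r)| = N / 2\<^sup>t\<^sup>+\<^sup>d\<close> when the high part of \<open>r\<close> is a nonzero element of
  \<open>U = \<Union>\<^sub>j W\<^sub>j\<close>, while \<open>\<hat>A(r) = 0\<close> when it lies outside \<open>U\<close>.  So the large spectrum
  lies between the cylinders over \<open>U - {0}\<close> and over \<open>U\<close>, and its energy is at most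
  \<open>2\<^sup>3\<^sup>t T\<^sub>2(U)\<close>.

  For \<open>W\<^sub>j\<close> take the points \<open>(X, \<lambda>\<^sub>j X, \<lambda>\<^sub>j\<^sup>2 X, \<lambda>\<^sub>j\<^sup>3 X)\<close> of a moment curve over
  \<open>\<bbbF>\<^sub>2[X]\<close>, with distinct \<open>\<lambda>\<^sub>j\<close> of degree below \<open>t\<close> and \<open>deg X < d\<close>.  A Vandermonde
  argument shows that every solution of \<open>u\<^sub>1 + u\<^sub>2 = u\<^sub>3 + u\<^sub>4\<close> in \<open>U\<close> is trivial or lies in
  a single \<open>W\<^sub>j\<close>, so \<open>T\<^sub>2(U) \<le> 2\<^sup>t 2\<^sup>3\<^sup>d + 3 |U|\<^sup>2\<close>.  Choosing \<open>2\<^sup>d \<approx> 1/\<delta>\<close> and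
  \<open>2\<^sup>t\<^sup>+\<^sup>d \<approx> 1/\<alpha>\<close> gives the bounds.  The lower bound on \<open>\<alpha>\<close> only ensures that
  \<open>n\<close> is large enough to hold the construction.\<close>

section \<open>The group \<open>\<int>\<^sub>2\<^sup>n\<close> and its characters\<close>

definition vzero :: "nat \<Rightarrow> bool" where
  "vzero = (\<lambda>_. False)"

definition walsh :: "nat \<Rightarrow> (nat \<Rightarrow> bool) \<Rightarrow> (nat \<Rightarrow> bool) \<Rightarrow> real" where
  "walsh n r x = (-1) ^ ip n r x"

lemma walsh_eq_parity: "walsh n r x = (-1) ^ card {i. i < n \<and> r i \<and> x i}"
  unfolding walsh_def ip_def by (simp add: minus_one_power_iff)

lemma cube_eq_image_Pow: "cube n = (\<lambda>S i. i \<in> S) ` Pow {..<n}"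
proof
  show "cube n \<subseteq> (\<lambda>S i. i \<in> S) ` Pow {..<n}"
  proof
    fix x assume "x \<in> cube n"
    then have "{i. x i} \<subseteq> {..<n}" unfolding cube_def by (auto, meson not_le)
    moreover have "x = (\<lambda>i. i \<in> {i. x i})" by simp
    ultimately show "x \<in> (\<lambda>S i. i \<in> S) ` Pow {..<n}" by blast
  qed
qed (auto simp: cube_def)

lemma finite_cube [simp]: "finite (cube n)"
  by (simp add: cube_eq_image_Pow)

lemma card_cube: "card (cube n) = 2 ^ n"
proof -
  have "inj (\<lambda>S i. i \<in> (S::nat set))"
    by (rule injI) (metis Collect_mem_eq)
  then have "card (cube n) = card (Pow {..<n})"
    unfolding cube_eq_image_Pow by (simp add: card_image inj_on_subset)
  then show ?thesis by (simp add: card_Pow)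
qed

lemma cube_mono: "t \<le> n \<Longrightarrow> cube t \<subseteq> cube n"
  unfolding cube_def by auto

lemma vzero_in_cube [simp]: "vzero \<in> cube n"
  unfolding vzero_def cube_def by auto

lemma vadd_in_cube: "x \<in> cube n \<Longrightarrow> y \<in> cube n \<Longrightarrow> vadd x y \<in> cube n"
  unfolding vadd_def cube_def by auto

lemma vadd_assoc: "vadd (vadd x y) z = vadd x (vadd y z)"
  unfolding vadd_def by auto

lemma vadd_self [simp]: "vadd x x = vzero"
  unfolding vadd_def vzero_def by auto

lemma vadd_vzero [simp]: "vadd x vzero = x" "vadd vzero x = x"
  unfolding vadd_def vzero_def by auto

lemma vadd_eq_vzero_iff: "vadd x y = vzero \<longleftrightarrow> x = y"
  unfolding vadd_def vzero_def by (auto simp: fun_eq_iff)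

lemma vadd_eq_vadd_imp: "vadd x y = vadd z w \<Longrightarrow> w = vadd (vadd x y) z"
  unfolding vadd_def by (auto simp: fun_eq_iff)

lemma walsh_commute: "walsh n r x = walsh n x r"
  unfolding walsh_eq_parity by (simp add: conj_commute)

lemma walsh_vzero [simp]: "walsh n vzero x = 1" "walsh n x vzero = 1"
  unfolding walsh_eq_parity vzero_def by auto

lemma walsh_cases: "walsh n r x = 1 \<or> walsh n r x = -1"
  unfolding walsh_eq_parity by (simp add: minus_one_power_iff)

lemma abs_walsh [simp]: "\<bar>walsh n r x\<bar> = 1"
  using walsh_cases[of n r x] by auto

lemma walsh_vadd_right: "walsh n r (vadd x y) = walsh n r x * walsh n r y"
proof -
  define Sx where "Sx = {i. i < n \<and> r i \<and> x i}"
  define Sy where "Sy = {i. i < n \<and> r i \<and> y i}"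
  have fin: "finite Sx" "finite Sy" unfolding Sx_def Sy_def by auto
  have "{i. i < n \<and> r i \<and> vadd x y i} = (Sx - Sy) \<union> (Sy - Sx)"
    unfolding Sx_def Sy_def vadd_def by auto
  then have "card {i. i < n \<and> r i \<and> vadd x y i} + 2 * card (Sx \<inter> Sy) = card Sx + card Sy"
    using fin card_Un_disjoint[of "Sx - Sy" "Sy - Sx"] card_Int_Diff[OF fin(1), of Sy]
      card_Int_Diff[OF fin(2), of Sx] by (auto simp: Int_commute)
  then have "even (card {i. i < n \<and> r i \<and> vadd x y i}) \<longleftrightarrow> even (card Sx + card Sy)"
    by (metis even_add even_mult_iff even_numeral)
  then show ?thesis unfolding walsh_eq_parity Sx_def Sy_def
    by (simp add: minus_one_power_iff power_add)
qed

lemma walsh_vadd_left: "walsh n (vadd x y) r = walsh n x r * walsh n y r"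
  by (metis walsh_commute walsh_vadd_right)

lemma sum_walsh_subgroup:
  assumes "finite H" and closed: "\<And>a b. a \<in> H \<Longrightarrow> b \<in> H \<Longrightarrow> vadd a b \<in> H"
  shows "(\<Sum>w\<in>H. walsh n w y) = (if \<forall>w\<in>H. walsh n w y = 1 then real (card H) else 0)"
proof (cases "\<forall>w\<in>H. walsh n w y = 1")
  case False
  then obtain w0 where w0: "w0 \<in> H" "walsh n w0 y = -1"
    using walsh_cases by blast
  have "bij_betw (vadd w0) H H"
    by (rule bij_betwI[where g = "vadd w0"]) (use closed w0 in \<open>auto simp flip: vadd_assoc\<close>)
  then have "(\<Sum>w\<in>H. walsh n w y) = (\<Sum>w\<in>H. walsh n (vadd w0 w) y)"
    using sum.reindex_bij_betw[of "vadd w0" H H "\<lambda>w. walsh n w y"] by simp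
  also have "\<dots> = - (\<Sum>w\<in>H. walsh n w y)"
    by (simp add: walsh_vadd_left w0 sum_negf)
  finally have "(\<Sum>w\<in>H. walsh n w y) = 0" by linarith
  then show ?thesis by (simp only: if_not_P[OF False])
qed simp

definition low_part :: "nat \<Rightarrow> (nat \<Rightarrow> bool) \<Rightarrow> (nat \<Rightarrow> bool)" where
  "low_part t x = (\<lambda>i. i < t \<and> x i)"

definition high_part :: "nat \<Rightarrow> (nat \<Rightarrow> bool) \<Rightarrow> (nat \<Rightarrow> bool)" where
  "high_part t x = (\<lambda>i. t \<le> i \<and> x i)"

lemma vadd_low_high_part: "vadd (low_part t x) (high_part t x) = x"
  unfolding vadd_def low_part_def high_part_def by (auto simp: fun_eq_iff)

lemma low_part_vadd: "low_part t (vadd x y) = vadd (low_part t x) (low_part t y)"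
  unfolding vadd_def low_part_def by (auto simp: fun_eq_iff)

lemma high_part_vadd: "high_part t (vadd x y) = vadd (high_part t x) (high_part t y)"
  unfolding vadd_def high_part_def by (auto simp: fun_eq_iff)

lemma low_part_in_cube: "low_part t x \<in> cube t"
  unfolding low_part_def cube_def by auto

lemma low_part_cube: "a \<in> cube t \<Longrightarrow> low_part t a = a"
  unfolding low_part_def cube_def by (auto simp: fun_eq_iff not_le[symmetric])

lemma high_part_cube: "a \<in> cube t \<Longrightarrow> high_part t a = vzero"
  unfolding high_part_def cube_def vzero_def by (auto simp: fun_eq_iff)

lemma low_part_vzero [simp]: "low_part t vzero = vzero"
  and high_part_vzero [simp]: "high_part t vzero = vzero"
  unfolding low_part_def high_part_def vzero_def by auto

lemma high_part_eq_self: "low_part t x = vzero \<Longrightarrow> high_part t x = x"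
  by (metis vadd_low_high_part vadd_vzero(2))

lemma low_part_cube_eq_vzero_iff: "x \<in> cube n \<Longrightarrow> low_part n x = vzero \<longleftrightarrow> x = vzero"
  using low_part_cube[of x n] by simp

lemma low_part_vadd_eq_vzero_iff:
  "j \<in> cube t \<Longrightarrow> low_part t (vadd x j) = vzero \<longleftrightarrow> low_part t x = j"
  by (simp add: low_part_vadd low_part_cube vadd_eq_vzero_iff)

lemma sum_walsh_cube:
  assumes "t \<le> n"
  shows "(\<Sum>a\<in>cube t. walsh n a y) = (if low_part t y = vzero then 2 ^ t else 0)"
proof -
  have "(\<forall>a\<in>cube t. walsh n a y = 1) \<longleftrightarrow> low_part t y = vzero"
  proof
    assume all: "\<forall>a\<in>cube t. walsh n a y = 1"
    show "low_part t y = vzero"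
    proof (rule ccontr)
      assume "low_part t y \<noteq> vzero"
      then obtain i where i: "i < t" "y i" unfolding low_part_def vzero_def by (auto simp: fun_eq_iff)
      then have "{k. k < n \<and> k = i \<and> y k} = {i}" using assms by auto
      moreover have "(\<lambda>k. k = i) \<in> cube t" using i unfolding cube_def by auto
      ultimately show False using all unfolding walsh_eq_parity by force
    qed
  next
    assume low: "low_part t y = vzero"
    show "\<forall>a\<in>cube t. walsh n a y = 1"
    proof
      fix a assume "a \<in> cube t"
      then have "{k. k < n \<and> a k \<and> y k} = {}"
        using low unfolding low_part_def vzero_def cube_def by (auto simp: fun_eq_iff not_less[symmetric])
      then show "walsh n a y = 1" unfolding walsh_eq_parity by (metis card.empty power_0)
    qed
  qed
  then show ?thesis
    by (subst sum_walsh_subgroup) (auto simp: vadd_in_cube card_cube)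
qed

corollary sum_walsh_full_cube:
  "v \<in> cube n \<Longrightarrow> (\<Sum>x\<in>cube n. walsh n v x) = (if v = vzero then 2 ^ n else 0)"
  by (simp add: walsh_commute[of n v] sum_walsh_cube low_part_cube_eq_vzero_iff)

section \<open>Additive energy of cylinders\<close>

definition add_quadruples ::
    "(nat \<Rightarrow> bool) set \<Rightarrow> ((nat \<Rightarrow> bool) \<times> (nat \<Rightarrow> bool) \<times> (nat \<Rightarrow> bool) \<times> (nat \<Rightarrow> bool)) set" where
  "add_quadruples B = {(r1, r2, r3, r4). r1 \<in> B \<and> r2 \<in> B \<and> r3 \<in> B \<and> r4 \<in> B \<and> vadd r1 r2 = vadd r3 r4}"

lemma T2_eq_card_add_quadruples: "T2 B = card (add_quadruples B)"
  unfolding T2_def add_quadruples_def ..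

lemma finite_add_quadruples: "finite B \<Longrightarrow> finite (add_quadruples B)"
  by (rule finite_subset[of _ "B \<times> B \<times> B \<times> B"]) (auto simp: add_quadruples_def)

lemma T2_mono: "finite B' \<Longrightarrow> B \<subseteq> B' \<Longrightarrow> T2 B \<le> T2 B'"
  unfolding T2_eq_card_add_quadruples
  by (rule card_mono[OF finite_add_quadruples]) (auto simp: add_quadruples_def)

definition cylinder :: "nat \<Rightarrow> nat \<Rightarrow> (nat \<Rightarrow> bool) set \<Rightarrow> (nat \<Rightarrow> bool) set" where
  "cylinder n t S = {r \<in> cube n. high_part t r \<in> S}"

lemma finite_cylinder [simp]: "finite (cylinder n t S)"
  unfolding cylinder_def by simp

lemma card_cylinder:
  assumes "t \<le> n" and S: "S \<subseteq> cube n" and low_S: "\<And>s. s \<in> S \<Longrightarrow> low_part t s = vzero"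
  shows "card (cylinder n t S) = 2 ^ t * card S"
proof -
  let ?f = "\<lambda>(a, s). vadd a s"
  have low_f: "low_part t (vadd a s) = a" and high_f: "high_part t (vadd a s) = s"
    if "a \<in> cube t" "s \<in> S" for a s
    using that by (simp_all add: low_part_vadd high_part_vadd low_part_cube high_part_cube
        low_S high_part_eq_self)
  have "inj_on ?f (cube t \<times> S)"
  proof (rule inj_onI, clarify)
    fix a s a' s' assume "a \<in> cube t" "s \<in> S" "a' \<in> cube t" "s' \<in> S" "vadd a s = vadd a' s'"
    then show "a = a' \<and> s = s'" using low_f high_f by metis
  qed
  moreover have "?f ` (cube t \<times> S) = cylinder n t S"
  proof
    show "?f ` (cube t \<times> S) \<subseteq> cylinder n t S"
      using S cube_mono[OF \<open>t \<le> n\<close>] high_f unfolding cylinder_def by (auto intro: vadd_in_cube)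
    show "cylinder n t S \<subseteq> ?f ` (cube t \<times> S)"
    proof
      fix r assume "r \<in> cylinder n t S"
      then have "(low_part t r, high_part t r) \<in> cube t \<times> S"
        unfolding cylinder_def by (simp add: low_part_in_cube)
      moreover have "r = ?f (low_part t r, high_part t r)" by (simp add: vadd_low_high_part)
      ultimately show "r \<in> ?f ` (cube t \<times> S)" by blast
    qed
  qed
  ultimately show ?thesis
    by (metis card_image card_cartesian_product card_cube)
qed

lemma T2_cylinder_le:
  assumes "finite S"
  shows "T2 (cylinder n t S) \<le> 2 ^ t * 2 ^ t * 2 ^ t * T2 S"
proof -
  define f where "f = (\<lambda>((a1, a2, a3), (u1, u2, u3, u4)).
    (vadd a1 u1, vadd a2 u2, vadd a3 u3, vadd (vadd (vadd a1 a2) a3) u4))"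
  have "add_quadruples (cylinder n t S) \<subseteq> f ` ((cube t \<times> cube t \<times> cube t) \<times> add_quadruples S)"
  proof
    fix q assume q: "q \<in> add_quadruples (cylinder n t S)"
    obtain r1 r2 r3 r4 where q_eq: "q = (r1, r2, r3, r4)" by (cases q)
    have r: "high_part t r1 \<in> S" "high_part t r2 \<in> S" "high_part t r3 \<in> S" "high_part t r4 \<in> S"
      and eq: "vadd r1 r2 = vadd r3 r4"
      using q unfolding q_eq add_quadruples_def cylinder_def by auto
    have low4: "low_part t r4 = vadd (vadd (low_part t r1) (low_part t r2)) (low_part t r3)"
      using arg_cong[OF eq, of "low_part t"] by (simp add: low_part_vadd vadd_eq_vadd_imp)
    have "q = f ((low_part t r1, low_part t r2, low_part t r3),
                      (high_part t r1, high_part t r2, high_part t r3, high_part t r4))"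
      unfolding f_def q_eq by (simp add: vadd_low_high_part flip: low4)
    moreover have "vadd (high_part t r1) (high_part t r2) = vadd (high_part t r3) (high_part t r4)"
      using arg_cong[OF eq, of "high_part t"] by (simp add: high_part_vadd)
    ultimately show "q \<in> f ` ((cube t \<times> cube t \<times> cube t) \<times> add_quadruples S)"
      using r unfolding add_quadruples_def by (auto simp: low_part_in_cube)
  qed
  then have "card (add_quadruples (cylinder n t S))
      \<le> card (f ` ((cube t \<times> cube t \<times> cube t) \<times> add_quadruples S))"
    by (rule card_mono[rotated]) (simp add: assms finite_add_quadruples)
  also have "\<dots> \<le> card ((cube t \<times> cube t \<times> cube t) \<times> add_quadruples S)"
    by (rule card_image_le) (simp add: assms finite_add_quadruples)
  finally show ?thesis by (simp add: card_cartesian_product card_cube T2_eq_card_add_quadruples)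
qed

section \<open>Power sums with distinct nodes\<close>

lemma fibre_sums_eq_0_if_power_sums_eq_0:
  fixes L X :: "'i \<Rightarrow> 'a::idom"
  assumes "finite I" and "card (L ` I) \<le> N" and power_sums: "\<forall>e<N. (\<Sum>i\<in>I. L i ^ e * X i) = 0"
  shows "sum X {i\<in>I. L i = \<mu>} = 0"
proof (cases "\<mu> \<in> L ` I")
  case False
  then show ?thesis by (auto intro!: sum.neutral)
next
  case True
  define S where "S = L ` I - {\<mu>}"
  define Q where "Q = (\<Prod>\<nu>\<in>S. [:-\<nu>, 1:])"
  have "finite S" using \<open>finite I\<close> unfolding S_def by auto
  have poly_Q: "poly Q z = (\<Prod>\<nu>\<in>S. z - \<nu>)" for z by (simp add: Q_def poly_prod)
  text \<open>\<open>Q\<close> vanishes at every node except \<open>\<mu>\<close>, and its degree is below the number of nodes.\<close>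
  have "degree Q \<le> card S"
    unfolding Q_def using degree_prod_sum_le[OF \<open>finite S\<close>, of "\<lambda>\<nu>. [:-\<nu>, 1:]"] by simp
  also have "card S < card (L ` I)"
    unfolding S_def using True \<open>finite I\<close> by (metis card_Diff1_less finite_imageI)
  finally have deg_Q: "degree Q < N" using assms(2) by linarith
  have "sum X {i\<in>I. L i = \<mu>} * poly Q \<mu> = (\<Sum>i\<in>I. if L i = \<mu> then X i * poly Q \<mu> else 0)"
    unfolding sum_distrib_right sum.inter_filter[OF \<open>finite I\<close>] by (rule sum.cong) auto
  also have "\<dots> = (\<Sum>i\<in>I. X i * poly Q (L i))"
    using \<open>finite S\<close> by (intro sum.cong) (auto simp: poly_Q S_def prod_zero_iff)
  also have "\<dots> = (\<Sum>e\<le>degree Q. coeff Q e * (\<Sum>i\<in>I. L i ^ e * X i))"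
    by (simp add: poly_altdef sum_distrib_left mult_ac sum.swap[of _ I])
  also have "\<dots> = 0" using power_sums deg_Q by (intro sum.neutral) auto
  finally have "sum X {i\<in>I. L i = \<mu>} * poly Q \<mu> = 0" .
  moreover have "poly Q \<mu> \<noteq> 0"
    unfolding poly_Q using \<open>finite S\<close> by (auto simp: prod_zero_iff S_def)
  ultimately show ?thesis by simp
qed

lemma degree_add_less: "degree p < m \<Longrightarrow> degree q < m \<Longrightarrow> degree (p + q) < m"
  using degree_add_le_max[of p q] by simp

lemma bit_add_self: "(b::bit) + b = 0"
  by (cases b) simp_all

lemma bitpoly_add_self: "(p::bit poly) + p = 0"
  by (rule poly_eqI) (simp only: coeff_add bit_add_self coeff_0)

lemma bitpoly_add_eq_0_iff: "(p::bit poly) + q = 0 \<longleftrightarrow> p = q"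
  by (metis add.assoc add_0 add.commute bitpoly_add_self)

text \<open>The node attached to a zero coefficient is irrelevant, which is what \<open>f\<close> encodes.\<close>

lemma four_power_sums_eq_0_cases:
  fixes x1 x2 x3 x4 l1 l2 l3 l4 :: "bit poly" and f :: "bit poly \<Rightarrow> bit poly \<Rightarrow> 'c"
  assumes power_sums: "\<forall>e<4. l1 ^ e * x1 + l2 ^ e * x2 + l3 ^ e * x3 + l4 ^ e * x4 = 0"
    and f_0: "\<And>l. f l 0 = z"
  shows "(\<exists>\<mu>\<in>{l1, l2, l3}. (x1 \<noteq> 0 \<longrightarrow> l1 = \<mu>) \<and> (x2 \<noteq> 0 \<longrightarrow> l2 = \<mu>) \<and> (x3 \<noteq> 0 \<longrightarrow> l3 = \<mu>))
    \<or> (f l1 x1 = f l2 x2 \<and> f l3 x3 = f l4 x4) \<or> (f l1 x1 = f l3 x3 \<and> f l2 x2 = f l4 x4)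
    \<or> (f l1 x1 = f l4 x4 \<and> f l2 x2 = f l3 x3)"
proof -
  define X where "X = (\<lambda>i::nat. if i = 0 then x1 else if i = 1 then x2 else if i = 2 then x3 else x4)"
  define L where "L = (\<lambda>i::nat. if i = 0 then l1 else if i = 1 then l2 else if i = 2 then l3 else l4)"
  have sum4: "(\<Sum>i<4. g i) = g 0 + g 1 + g 2 + g (3::nat)" for g :: "nat \<Rightarrow> bit poly"
    by (simp add: eval_nat_numeral)
  have fibre: "(if l1 = \<mu> then x1 else 0) + (if l2 = \<mu> then x2 else 0)
      + (if l3 = \<mu> then x3 else 0) + (if l4 = \<mu> then x4 else 0) = 0" for \<mu>
  proof -
    have "card (L ` {..<4}) \<le> 4"
      using card_image_le[of "{..<4::nat}" L] by simp
    moreover have "\<forall>e<4. (\<Sum>i<4. L i ^ e * X i) = 0"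
      using power_sums unfolding sum4 X_def L_def by simp
    ultimately have "sum X {i\<in>{..<4}. L i = \<mu>} = 0"
      by (intro fibre_sums_eq_0_if_power_sums_eq_0) auto
    then show ?thesis
      unfolding sum.inter_filter[OF finite_lessThan] sum4
      by (simp add: X_def L_def cong: if_cong split del: if_split)
  qed
  show ?thesis
    using fibre[of l1] fibre[of l2] fibre[of l3] fibre[of l4]
    by (cases "l1 = l2"; cases "l1 = l3"; cases "l1 = l4"; cases "l2 = l3"; cases "l2 = l4";
        cases "l3 = l4") (simp_all add: bitpoly_add_eq_0_iff f_0)
qed

section \<open>A set whose large spectrum is a cylinder over a union of subspaces\<close>

locale subspace_family =
  fixes n t d :: nat and W :: "(nat \<Rightarrow> bool) \<Rightarrow> (nat \<Rightarrow> bool) set"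
  assumes t_le_n: "t \<le> n"
    and W_subset_cube: "W j \<subseteq> cube n"
    and card_W: "card (W j) = 2 ^ d"
    and vadd_closed: "a \<in> W j \<Longrightarrow> b \<in> W j \<Longrightarrow> vadd a b \<in> W j"
    and low_part_W: "w \<in> W j \<Longrightarrow> low_part t w = vzero"
    and W_disjoint: "j \<in> cube t \<Longrightarrow> j' \<in> cube t \<Longrightarrow> w \<in> W j \<Longrightarrow> w \<in> W j' \<Longrightarrow> w \<noteq> vzero \<Longrightarrow> j = j'"
begin

lemma finite_W [simp]: "finite (W j)"
  using card_W by (metis card.infinite power_not_zero zero_neq_numeral)

lemma vzero_in_W: "vzero \<in> W j"
proof -
  have "W j \<noteq> {}" using card_W[of j] by auto
  then obtain w where "w \<in> W j" by blast
  then show ?thesis using vadd_closed[of w j w] by simp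
qed

definition W_union :: "(nat \<Rightarrow> bool) set" where
  "W_union = (\<Union>j\<in>cube t. W j)"

lemma finite_W_union [simp]: "finite W_union"
  unfolding W_union_def by simp

lemma card_W_union_le: "card W_union \<le> 2 ^ t * 2 ^ d"
proof -
  have "card W_union \<le> (\<Sum>j\<in>cube t. card (W j))"
    unfolding W_union_def by (rule card_UN_le) simp
  then show ?thesis by (simp add: card_W card_cube)
qed

lemma card_W_union_minus_vzero: "card (W_union - {vzero}) = 2 ^ t * (2 ^ d - 1)"
proof -
  have "W_union - {vzero} = (\<Union>j\<in>cube t. W j - {vzero})"
    unfolding W_union_def by auto
  also have "card \<dots> = (\<Sum>j\<in>cube t. card (W j - {vzero}))"
    by (rule card_UN_disjoint) (use W_disjoint in auto)
  also have "\<dots> = 2 ^ t * (2 ^ d - 1)"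
    by (simp add: vzero_in_W card_W card_cube)
  finally show ?thesis .
qed

definition W_perp :: "(nat \<Rightarrow> bool) set" where
  "W_perp = {x \<in> cube n. \<forall>w\<in>W (low_part t x). walsh n w x = 1}"

lemma W_perp_subset_cube: "W_perp \<subseteq> cube n"
  unfolding W_perp_def by auto

lemma indicator_W_perp:
  assumes "x \<in> cube n"
  shows "(if x \<in> W_perp then 1 else 0) = (1 / (2 ^ t * 2 ^ d)) *
     (\<Sum>j\<in>cube t. \<Sum>a\<in>cube t. \<Sum>w\<in>W j. walsh n a x * walsh n a j * walsh n w x)"
proof -
  have "(\<Sum>j\<in>cube t. \<Sum>a\<in>cube t. \<Sum>w\<in>W j. walsh n a x * walsh n a j * walsh n w x)
      = (\<Sum>j\<in>cube t. (\<Sum>a\<in>cube t. walsh n a (vadd x j)) * (\<Sum>w\<in>W j. walsh n w x))"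
    by (simp add: walsh_vadd_right sum_product)
  also have "\<dots> = (\<Sum>j\<in>cube t. if j = low_part t x then 2 ^ t * (\<Sum>w\<in>W j. walsh n w x) else 0)"
    by (intro sum.cong) (auto simp: sum_walsh_cube[OF t_le_n] low_part_vadd_eq_vzero_iff)
  also have "\<dots> = 2 ^ t * (\<Sum>w\<in>W (low_part t x). walsh n w x)"
    by (simp add: low_part_in_cube)
  also have "(\<Sum>w\<in>W (low_part t x). walsh n w x) = 2 ^ d * (if x \<in> W_perp then 1 else 0)"
    using assms by (simp add: sum_walsh_subgroup vadd_closed card_W W_perp_def)
  finally show ?thesis by simp
qed

lemma sum_vadd_decomposition:
  "(\<Sum>a\<in>cube t. \<Sum>w\<in>W j. if vadd a w = r then g a else 0)
     = (if high_part t r \<in> W j then g (low_part t r) else 0)"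
proof -
  have "vadd a w = r \<longleftrightarrow> a = low_part t r \<and> w = high_part t r" if "a \<in> cube t" "w \<in> W j" for a w
    using that low_part_W[OF that(2)] vadd_low_high_part[of t r]
    by (auto simp: low_part_vadd high_part_vadd low_part_cube high_part_cube high_part_eq_self)
  then have "(\<Sum>a\<in>cube t. \<Sum>w\<in>W j. if vadd a w = r then g a else 0)
      = (\<Sum>a\<in>cube t. if a = low_part t r then (\<Sum>w\<in>W j. if w = high_part t r then g a else 0) else 0)"
    by (intro sum.cong) auto
  then show ?thesis by (simp add: low_part_in_cube)
qed

lemma fourier_W_perp:
  assumes r: "r \<in> cube n"
  shows "fourier_ind n W_perp r = 2 ^ n / (2 ^ t * 2 ^ d) *
     (\<Sum>j\<in>cube t. if high_part t r \<in> W j then walsh n (low_part t r) j else 0)"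
proof -
  define K :: real where "K = 2 ^ t * 2 ^ d"
  have "fourier_ind n W_perp r = (\<Sum>x\<in>cube n. walsh n r x * (if x \<in> W_perp then 1 else 0))"
    unfolding fourier_ind_def walsh_def by simp
  also have "\<dots> = (1 / K) * (\<Sum>j\<in>cube t. \<Sum>a\<in>cube t. \<Sum>w\<in>W j.
       walsh n a j * (\<Sum>x\<in>cube n. walsh n (vadd r (vadd a w)) x))"
    by (simp add: indicator_W_perp K_def sum_distrib_left walsh_vadd_left mult_ac
        sum.swap[of _ "cube n"])
  also have "\<dots> = (1 / K) * (\<Sum>j\<in>cube t. \<Sum>a\<in>cube t. \<Sum>w\<in>W j.
       if vadd a w = r then 2 ^ n * walsh n a j else 0)"
  proof -
    have "vadd r (vadd a w) \<in> cube n" if "a \<in> cube t" "w \<in> W j" for a w j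
      using that r cube_mono[OF t_le_n] W_subset_cube by (blast intro: vadd_in_cube)
    then show ?thesis
      by (intro arg_cong[where f = "(*) (1 / K)"] sum.cong refl)
        (auto simp: sum_walsh_full_cube vadd_eq_vzero_iff)
  qed
  also have "\<dots> = 2 ^ n / K * (\<Sum>j\<in>cube t. if high_part t r \<in> W j then walsh n (low_part t r) j else 0)"
    by (simp add: sum_vadd_decomposition sum_distrib_left if_distrib[of "(*) (2 ^ n)"] cong: if_cong)
  finally show ?thesis unfolding K_def .
qed

lemma card_W_perp: "real (card W_perp) = 2 ^ n / 2 ^ d"
proof -
  have "ip n vzero x = 0" for x
    unfolding ip_def vzero_def by simp
  then have "fourier_ind n W_perp vzero = real (card (cube n \<inter> W_perp))"
    unfolding fourier_ind_def by (simp add: sum.inter_restrict[symmetric])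
  also have "cube n \<inter> W_perp = W_perp"
    using W_perp_subset_cube by auto
  finally have "real (card W_perp) = fourier_ind n W_perp vzero" ..
  also have "\<dots> = 2 ^ n / (2 ^ t * 2 ^ d) * 2 ^ t"
    by (simp add: fourier_W_perp vzero_in_W card_cube)
  finally show ?thesis by simp
qed

lemma abs_fourier_W_perp_on_cylinder:
  assumes "r \<in> cylinder n t (W_union - {vzero})"
  shows "\<bar>fourier_ind n W_perp r\<bar> = 2 ^ n / (2 ^ t * 2 ^ d)"
proof -
  obtain j0 where j0: "j0 \<in> cube t" "high_part t r \<in> W j0" "high_part t r \<noteq> vzero" and "r \<in> cube n"
    using assms unfolding cylinder_def W_union_def by auto
  then have "(\<Sum>j\<in>cube t. if high_part t r \<in> W j then walsh n (low_part t r) j else 0)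
      = (\<Sum>j\<in>cube t. if j = j0 then walsh n (low_part t r) j0 else 0)"
    by (intro sum.cong) (use W_disjoint in auto)
  then show ?thesis
    using j0(1) by (simp add: fourier_W_perp[OF \<open>r \<in> cube n\<close>] abs_mult)
qed

lemma fourier_W_perp_off_cylinder:
  assumes "r \<in> cube n" "r \<notin> cylinder n t W_union"
  shows "fourier_ind n W_perp r = 0"
  using assms by (simp add: fourier_W_perp cylinder_def W_union_def)

lemma card_large_spec_W_perp_ge:
  assumes "\<alpha> * (2 ^ t * 2 ^ d) \<le> 1"
  shows "2 ^ t * (2 ^ t * (2 ^ d - 1)) \<le> card (large_spec n \<alpha> W_perp)"
proof -
  have "\<alpha> * 2 ^ n \<le> 2 ^ n / (2 ^ t * 2 ^ d)"
    using assms by (simp add: field_simps)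
  then have "cylinder n t (W_union - {vzero}) \<subseteq> large_spec n \<alpha> W_perp"
    using abs_fourier_W_perp_on_cylinder unfolding large_spec_def cylinder_def by auto
  then have "card (cylinder n t (W_union - {vzero})) \<le> card (large_spec n \<alpha> W_perp)"
    by (rule card_mono[rotated]) (simp add: large_spec_def)
  moreover have "card (cylinder n t (W_union - {vzero})) = 2 ^ t * card (W_union - {vzero})"
    using W_subset_cube low_part_W by (intro card_cylinder[OF t_le_n]) (auto simp: W_union_def)
  ultimately show ?thesis
    by (simp add: card_W_union_minus_vzero)
qed

lemma T2_large_spec_W_perp_le:
  assumes "0 < \<alpha>"
  shows "T2 (large_spec n \<alpha> W_perp) \<le> 2 ^ t * 2 ^ t * 2 ^ t * T2 W_union"
proof -
  have "large_spec n \<alpha> W_perp \<subseteq> cylinder n t W_union"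
  proof
    fix r assume "r \<in> large_spec n \<alpha> W_perp"
    then have "r \<in> cube n" "\<alpha> * 2 ^ n \<le> \<bar>fourier_ind n W_perp r\<bar>"
      unfolding large_spec_def by auto
    moreover have "0 < \<alpha> * 2 ^ n" using assms by simp
    ultimately show "r \<in> cylinder n t W_union"
      using fourier_W_perp_off_cylinder by fastforce
  qed
  then have "T2 (large_spec n \<alpha> W_perp) \<le> T2 (cylinder n t W_union)"
    by (rule T2_mono[OF finite_cylinder])
  also have "\<dots> \<le> 2 ^ t * 2 ^ t * 2 ^ t * T2 W_union"
    by (rule T2_cylinder_le) simp
  finally show ?thesis .
qed

end

section \<open>Moment curves over \<open>\<bbbF>\<^sub>2[X]\<close>\<close>

definition poly_of_vec :: "nat \<Rightarrow> (nat \<Rightarrow> bool) \<Rightarrow> bit poly" where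
  "poly_of_vec D a = Poly (map (\<lambda>i. if a i then 1 else 0) [0..<D])"

lemma coeff_poly_of_vec: "coeff (poly_of_vec D a) i = (if i < D \<and> a i then 1 else 0)"
  by (simp add: poly_of_vec_def nth_default_def)

lemma degree_poly_of_vec: "degree (poly_of_vec D a) \<le> D"
  by (rule degree_le) (simp add: coeff_poly_of_vec)

lemma poly_of_vec_vadd: "poly_of_vec D (vadd a b) = poly_of_vec D a + poly_of_vec D b"
  by (rule poly_eqI) (auto simp: coeff_poly_of_vec vadd_def)

lemma poly_of_vec_inj:
  assumes "a \<in> cube D" "b \<in> cube D" "poly_of_vec D a = poly_of_vec D b"
  shows "a = b"
proof
  fix i
  have "coeff (poly_of_vec D a) i = coeff (poly_of_vec D b) i" using assms(3) by simp
  then show "a i = b i" using assms(1,2) unfolding cube_def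
    by (cases "i < D") (auto simp: coeff_poly_of_vec split: if_splits)
qed

text \<open>Coordinates \<open>t + e L + q\<close>, for \<open>e < 4\<close> and \<open>q < L\<close>, carry the coefficient of \<open>X\<^sup>q\<close> in the
  \<open>e\<close>-th polynomial; \<open>L\<close> is large enough for \<open>\<lambda>\<^sup>e X\<close> with \<open>deg \<lambda> < t\<close> and \<open>deg X < d\<close>.\<close>

locale moment_construction =
  fixes t d n :: nat
  assumes dimension: "t + 4 * (3 * t + d + 1) \<le> n"
begin

abbreviation block_len :: nat where
  "block_len \<equiv> 3 * t + d + 1"

definition block_vec :: "(nat \<Rightarrow> bit poly) \<Rightarrow> nat \<Rightarrow> bool" where
  "block_vec c = (\<lambda>i. t \<le> i \<and> (i - t) div block_len < 4
     \<and> coeff (c ((i - t) div block_len)) ((i - t) mod block_len) = 1)"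

lemma block_vec_in_cube: "block_vec c \<in> cube n"
  unfolding cube_def
proof (intro CollectI allI impI notI)
  fix i assume "n \<le> i" and "block_vec c i"
  then have "4 * block_len \<le> i - t" "(i - t) div block_len < 4"
    using dimension unfolding block_vec_def by auto
  then show False by (simp add: div_less_iff_less_mult)
qed

lemma low_part_block_vec: "low_part t (block_vec c) = vzero"
  unfolding low_part_def block_vec_def vzero_def by auto

lemma vadd_block_vec: "vadd (block_vec c) (block_vec c') = block_vec (\<lambda>e. c e + c' e)"
proof -
  have "((a::bit) + b = 1) \<longleftrightarrow> ((a = 1) \<noteq> (b = 1))" for a b
    by (cases a; cases b) simp_all
  then show ?thesis unfolding vadd_def block_vec_def by (auto simp: fun_eq_iff)
qed

lemma block_vec_eq_vzero:
  assumes deg: "\<forall>e<4. degree (c e) < block_len" and zero: "block_vec c = vzero"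
  shows "\<forall>e<4. c e = 0"
proof (intro allI impI poly_eqI)
  fix e q :: nat assume e: "e < 4"
  show "coeff (c e) q = coeff 0 q"
  proof (cases "q < block_len")
    case True
    define i where "i = t + (e * block_len + q)"
    have divmod: "(e * L + q) div L = e" "(e * L + q) mod L = q" if "q < L" for L :: nat
      using that by (simp_all add: add.commute[of "e * L"])
    have "i - t = e * block_len + q" unfolding i_def by simp
    then have "(i - t) div block_len = e" "(i - t) mod block_len = q"
      using divmod[OF True] by simp_all
    moreover have "t \<le> i" "\<not> block_vec c i" using zero by (simp_all add: i_def vzero_def)
    ultimately have "coeff (c e) q \<noteq> 1" using e unfolding block_vec_def by simp
    then show ?thesis by simp
  next
    case False
    then have "degree (c e) < q" using deg e by force
    then show ?thesis by (simp add: coeff_eq_0)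
  qed
qed

definition label :: "(nat \<Rightarrow> bool) \<Rightarrow> bit poly" where
  "label j = poly_of_vec t j"

definition moment_vec :: "bit poly \<Rightarrow> bit poly \<Rightarrow> nat \<Rightarrow> bool" where
  "moment_vec l X = block_vec (\<lambda>e. l ^ e * X)"

definition moment_space :: "(nat \<Rightarrow> bool) \<Rightarrow> (nat \<Rightarrow> bool) set" where
  "moment_space j = (\<lambda>a. moment_vec (label j) (poly_of_vec d a)) ` cube d"

lemma degree_label: "degree (label j) \<le> t"
  unfolding label_def by (rule degree_poly_of_vec)

lemma degree_moment_term:
  assumes "degree l \<le> t" "degree X \<le> d" "e < 4"
  shows "degree (l ^ e * X) < block_len"
proof -
  have "degree (l ^ e * X) \<le> degree l * e + d"
    using degree_mult_le[of "l ^ e" X] degree_power_le[of l e] assms(2) by linarith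
  also have "degree l * e \<le> t * 3"
    using assms(1,3) by (intro mult_le_mono) auto
  finally show ?thesis by simp
qed

lemma moment_vec_0 [simp]: "moment_vec l 0 = vzero"
  unfolding moment_vec_def block_vec_def vzero_def by simp

lemma vadd_moment_vec: "vadd (moment_vec l X) (moment_vec l Y) = moment_vec l (X + Y)"
  unfolding moment_vec_def vadd_block_vec by (simp add: distrib_left)

lemma moment_vec_power_sums:
  assumes "degree l1 \<le> t" "degree l2 \<le> t" "degree l3 \<le> t" "degree l4 \<le> t"
    and "degree X1 \<le> d" "degree X2 \<le> d" "degree X3 \<le> d" "degree X4 \<le> d"
    and eq: "vadd (moment_vec l1 X1) (moment_vec l2 X2) = vadd (moment_vec l3 X3) (moment_vec l4 X4)"
  shows "\<forall>e<4. l1 ^ e * X1 + l2 ^ e * X2 + l3 ^ e * X3 + l4 ^ e * X4 = 0"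
proof -
  define c where "c e = (l1 ^ e * X1 + l2 ^ e * X2) + (l3 ^ e * X3 + l4 ^ e * X4)" for e :: nat
  have "block_vec c
      = vadd (vadd (moment_vec l1 X1) (moment_vec l2 X2)) (vadd (moment_vec l3 X3) (moment_vec l4 X4))"
    unfolding c_def moment_vec_def vadd_block_vec ..
  also have "\<dots> = vzero" using eq by (simp add: vadd_eq_vzero_iff)
  finally have "block_vec c = vzero" .
  moreover have "\<forall>e<4. degree (c e) < block_len"
    unfolding c_def using assms(1-8) by (intro allI impI degree_add_less degree_moment_term) auto
  ultimately have "\<forall>e<4. c e = 0"
    by (intro block_vec_eq_vzero)
  then show ?thesis unfolding c_def by (simp add: add.assoc)
qed

lemma moment_vec_eq:
  assumes "degree l \<le> t" "degree l' \<le> t" "degree X \<le> d" "degree Y \<le> d"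
    and "moment_vec l X = moment_vec l' Y"
  shows "X = Y \<and> (X \<noteq> 0 \<longrightarrow> l = l')"
proof -
  have sums: "\<forall>e<4. l ^ e * X + l' ^ e * Y = 0"
    using moment_vec_power_sums[of l l' 0 0 X Y 0 0] assms by simp
  from sums[rule_format, of 0] have "X = Y" by (simp add: bitpoly_add_eq_0_iff)
  moreover from sums[rule_format, of 1] this have "(l + l') * X = 0"
    by (simp add: distrib_right)
  ultimately show ?thesis by (auto simp: bitpoly_add_eq_0_iff)
qed

lemma label_inj: "j \<in> cube t \<Longrightarrow> j' \<in> cube t \<Longrightarrow> label j = label j' \<Longrightarrow> j = j'"
  unfolding label_def by (rule poly_of_vec_inj)

sublocale subspace_family n t d moment_space
proof
  show "t \<le> n" using dimension by simp
  show "moment_space j \<subseteq> cube n" for j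
    unfolding moment_space_def moment_vec_def using block_vec_in_cube by auto
  show "card (moment_space j) = 2 ^ d" for j
  proof -
    have "inj_on (\<lambda>a. moment_vec (label j) (poly_of_vec d a)) (cube d)"
    proof (rule inj_onI)
      fix a b assume "a \<in> cube d" "b \<in> cube d"
        and "moment_vec (label j) (poly_of_vec d a) = moment_vec (label j) (poly_of_vec d b)"
      then show "a = b"
        using moment_vec_eq[OF degree_label degree_label degree_poly_of_vec degree_poly_of_vec]
          poly_of_vec_inj by blast
    qed
    then show ?thesis unfolding moment_space_def by (simp add: card_image card_cube)
  qed
  show "vadd a b \<in> moment_space j" if "a \<in> moment_space j" "b \<in> moment_space j" for a b j
    using that unfolding moment_space_def by (auto simp: vadd_moment_vec poly_of_vec_vadd[symmetric] vadd_in_cube)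
  show "low_part t w = vzero" if "w \<in> moment_space j" for w j
    using that unfolding moment_space_def moment_vec_def by (auto simp: low_part_block_vec)
  show "j = j'" if j: "j \<in> cube t" "j' \<in> cube t" and w: "w \<in> moment_space j" "w \<in> moment_space j'"
    and "w \<noteq> vzero" for j j' w
  proof -
    obtain a b where "w = moment_vec (label j) (poly_of_vec d a)" "w = moment_vec (label j') (poly_of_vec d b)"
      using w unfolding moment_space_def by blast
    moreover have "poly_of_vec d a \<noteq> 0" using calculation \<open>w \<noteq> vzero\<close> by auto
    ultimately have "label j = label j'"
      using moment_vec_eq[OF degree_label degree_label degree_poly_of_vec degree_poly_of_vec] by blast
    then show ?thesis using label_inj j by blast
  qed
qed

lemma moment_vec_in_moment_space:
  assumes "j \<in> cube t" "j' \<in> cube t" "a \<in> cube d"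
    and "poly_of_vec d a \<noteq> 0 \<longrightarrow> label j = label j'"
  shows "moment_vec (label j) (poly_of_vec d a) \<in> moment_space j'"
proof (cases "poly_of_vec d a = 0")
  case True
  then show ?thesis using vzero_in_W by simp
next
  case False
  then have "j = j'" using assms label_inj by blast
  then show ?thesis using assms(3) unfolding moment_space_def by blast
qed

lemma W_union_quadruple_cases:
  assumes u: "u1 \<in> W_union" "u2 \<in> W_union" "u3 \<in> W_union" "u4 \<in> W_union"
    and eq: "vadd u1 u2 = vadd u3 u4"
  shows "(\<exists>j\<in>cube t. u1 \<in> moment_space j \<and> u2 \<in> moment_space j \<and> u3 \<in> moment_space j)
    \<or> (u1 = u2 \<and> u3 = u4) \<or> (u1 = u3 \<and> u2 = u4) \<or> (u1 = u4 \<and> u2 = u3)"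
proof -
  have W_union_elem: "\<exists>j\<in>cube t. \<exists>a\<in>cube d. u = moment_vec (label j) (poly_of_vec d a)"
    if "u \<in> W_union" for u
    using that unfolding W_union_def moment_space_def by blast
  obtain j1 a1 where "j1 \<in> cube t" "a1 \<in> cube d" and u1: "u1 = moment_vec (label j1) (poly_of_vec d a1)"
    using W_union_elem[OF u(1)] by blast
  obtain j2 a2 where "j2 \<in> cube t" "a2 \<in> cube d" and u2: "u2 = moment_vec (label j2) (poly_of_vec d a2)"
    using W_union_elem[OF u(2)] by blast
  obtain j3 a3 where "j3 \<in> cube t" "a3 \<in> cube d" and u3: "u3 = moment_vec (label j3) (poly_of_vec d a3)"
    using W_union_elem[OF u(3)] by blast
  obtain j4 a4 where "j4 \<in> cube t" "a4 \<in> cube d" and u4: "u4 = moment_vec (label j4) (poly_of_vec d a4)"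
    using W_union_elem[OF u(4)] by blast
  note j = \<open>j1 \<in> cube t\<close> \<open>j2 \<in> cube t\<close> \<open>j3 \<in> cube t\<close>
  note a = \<open>a1 \<in> cube d\<close> \<open>a2 \<in> cube d\<close> \<open>a3 \<in> cube d\<close>
  note u_eq = u1 u2 u3 u4
  define X where "X a = poly_of_vec d a" for a
  have "\<forall>e<4. label j1 ^ e * X a1 + label j2 ^ e * X a2 + label j3 ^ e * X a3 + label j4 ^ e * X a4 = 0"
    using eq unfolding u_eq X_def by (intro moment_vec_power_sums degree_label degree_poly_of_vec)
  from four_power_sums_eq_0_cases[OF this, of moment_vec vzero]
  consider (common) \<mu> where "\<mu> \<in> {label j1, label j2, label j3}" "X a1 \<noteq> 0 \<longrightarrow> label j1 = \<mu>"
      "X a2 \<noteq> 0 \<longrightarrow> label j2 = \<mu>" "X a3 \<noteq> 0 \<longrightarrow> label j3 = \<mu>"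
    | (paired) "(u1 = u2 \<and> u3 = u4) \<or> (u1 = u3 \<and> u2 = u4) \<or> (u1 = u4 \<and> u2 = u3)"
    unfolding u_eq X_def by auto
  then show ?thesis
  proof cases
    case common
    then obtain j where "j \<in> {j1, j2, j3}" "\<mu> = label j" by auto
    then show ?thesis
      using common j a unfolding u_eq X_def by (intro disjI1 bexI[of _ j] conjI moment_vec_in_moment_space) auto
  qed blast
qed

lemma T2_W_union_le: "T2 W_union \<le> 2 ^ t * (2 ^ d) ^ 3 + 3 * (2 ^ t * 2 ^ d) ^ 2"
proof -
  define S1 where "S1 = (\<Union>j\<in>cube t. (\<lambda>(a, b, c). (a, b, c, vadd (vadd a b) c))
    ` (moment_space j \<times> moment_space j \<times> moment_space j))"
  define S2 where "S2 = (\<lambda>(a, b). (a, a, b, b)) ` (W_union \<times> W_union)"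
  define S3 where "S3 = (\<lambda>(a, b). (a, b, a, b)) ` (W_union \<times> W_union)"
  define S4 where "S4 = (\<lambda>(a, b). (a, b, b, a)) ` (W_union \<times> W_union)"
  have sub: "add_quadruples W_union \<subseteq> S1 \<union> S2 \<union> S3 \<union> S4"
  proof
    fix q assume "q \<in> add_quadruples W_union"
    then obtain u1 u2 u3 u4 where q: "q = (u1, u2, u3, u4)"
      and u: "u1 \<in> W_union" "u2 \<in> W_union" "u3 \<in> W_union" "u4 \<in> W_union"
      and eq: "vadd u1 u2 = vadd u3 u4"
      unfolding add_quadruples_def by blast
    from W_union_quadruple_cases[OF u eq] show "q \<in> S1 \<union> S2 \<union> S3 \<union> S4"
    proof (elim disjE bexE conjE)
      fix j assume "j \<in> cube t" "u1 \<in> moment_space j" "u2 \<in> moment_space j" "u3 \<in> moment_space j"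
      moreover have "q = (\<lambda>(a, b, c). (a, b, c, vadd (vadd a b) c)) (u1, u2, u3)"
        using vadd_eq_vadd_imp[OF eq] by (simp add: q)
      ultimately have "q \<in> S1" unfolding S1_def by blast
      then show ?thesis by blast
    next
      assume "u1 = u2" "u3 = u4"
      then have "q = (\<lambda>(a, b). (a, a, b, b)) (u1, u3)" by (simp add: q)
      then show ?thesis using u unfolding S2_def by blast
    next
      assume "u1 = u3" "u2 = u4"
      then have "q = (\<lambda>(a, b). (a, b, a, b)) (u1, u2)" by (simp add: q)
      then show ?thesis using u unfolding S3_def by blast
    next
      assume "u1 = u4" "u2 = u3"
      then have "q = (\<lambda>(a, b). (a, b, b, a)) (u1, u2)" by (simp add: q)
      then show ?thesis using u unfolding S4_def by blast
    qed
  qed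
  have "finite S1" "finite S2" "finite S3" "finite S4"
    unfolding S1_def S2_def S3_def S4_def by auto
  then have "T2 W_union \<le> card (S1 \<union> S2 \<union> S3 \<union> S4)"
    unfolding T2_eq_card_add_quadruples using sub by (intro card_mono) auto
  also have "\<dots> \<le> card S1 + card S2 + card S3 + card S4"
    by (meson card_Un_le add_le_mono order_trans le_refl)
  finally have le_sum: "T2 W_union \<le> card S1 + card S2 + card S3 + card S4" .
  have "card S1 \<le> (\<Sum>j\<in>cube t. card (moment_space j \<times> moment_space j \<times> moment_space j))"
    unfolding S1_def
    by (intro order_trans[OF card_UN_le sum_mono] card_image_le finite_SigmaI finite_W finite_cube)
  then have S1: "card S1 \<le> 2 ^ t * (2 ^ d) ^ 3"
    by (simp add: card_cartesian_product card_W card_cube power3_eq_cube)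
  have "card (W_union \<times> W_union) \<le> (2 ^ t * 2 ^ d) ^ 2"
    using card_W_union_le by (simp add: card_cartesian_product power2_eq_square mult_le_mono)
  then have "card S2 \<le> (2 ^ t * 2 ^ d) ^ 2" "card S3 \<le> (2 ^ t * 2 ^ d) ^ 2" "card S4 \<le> (2 ^ t * 2 ^ d) ^ 2"
    unfolding S2_def S3_def S4_def by (auto intro: order_trans[OF card_image_le])
  with le_sum S1 show ?thesis by linarith
qed

lemma large_spec_W_perp_bounds:
  assumes "0 < \<alpha>" "\<alpha> * (2 ^ t * 2 ^ d) \<le> 1"
  shows "2 ^ t * 2 ^ t * (2 ^ d - 1) \<le> real (card (large_spec n \<alpha> W_perp))"
    and "real (T2 (large_spec n \<alpha> W_perp)) \<le> 2 ^ t * 2 ^ t * 2 ^ t * (2 ^ t * (2 ^ d) ^ 3 + 3 * (2 ^ t * 2 ^ d) ^ 2)"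
proof -
  have "real (2 ^ t * (2 ^ t * (2 ^ d - 1))) \<le> real (card (large_spec n \<alpha> W_perp))"
    using card_large_spec_W_perp_ge[OF assms(2)] by (simp only: of_nat_le_iff)
  then show "2 ^ t * 2 ^ t * (2 ^ d - 1) \<le> real (card (large_spec n \<alpha> W_perp))"
    by (simp add: of_nat_diff)
  have "T2 (large_spec n \<alpha> W_perp) \<le> 2 ^ t * 2 ^ t * 2 ^ t * (2 ^ t * (2 ^ d) ^ 3 + 3 * (2 ^ t * 2 ^ d) ^ 2)"
    using T2_large_spec_W_perp_le[OF assms(1)] T2_W_union_le by (meson le_trans mult_le_mono2)
  then have "real (T2 (large_spec n \<alpha> W_perp))
      \<le> real (2 ^ t * 2 ^ t * 2 ^ t * (2 ^ t * (2 ^ d) ^ 3 + 3 * (2 ^ t * 2 ^ d) ^ 2) :: nat)"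
    by (simp only: of_nat_le_iff)
  then show "real (T2 (large_spec n \<alpha> W_perp)) \<le> 2 ^ t * 2 ^ t * 2 ^ t * (2 ^ t * (2 ^ d) ^ 3 + 3 * (2 ^ t * 2 ^ d) ^ 2)"
    by simp
qed

end

section \<open>Choice of the parameters\<close>

lemma exists_power_of_two_bracket:
  fixes y :: real
  assumes "1 \<le> y"
  obtains k :: nat where "2 ^ k \<le> y" "y < 2 ^ (k + 1)"
proof -
  define k where "k = nat \<lfloor>log 2 y\<rfloor>"
  have "real_of_int \<lfloor>log 2 y\<rfloor> = real k"
    using assms unfolding k_def by simp
  moreover have "2 powr \<lfloor>log 2 y\<rfloor> \<le> y \<and> y < 2 powr (\<lfloor>log 2 y\<rfloor> + 1)"
    using floor_log_eq_powr_iff[of y 2 "\<lfloor>log 2 y\<rfloor>"] assms by simp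
  ultimately have "2 powr real k \<le> y" "y < 2 powr real (k + 1)"
    by (simp_all add: add.commute)
  then show ?thesis
    using that by (simp only: powr_realpow zero_less_numeral)
qed

lemma dimension_bound:
  fixes \<alpha> :: real
  assumes "0 < \<alpha>" "\<alpha> * 2 ^ (t + d) \<le> 1"
    and "(2 ^ n :: real) powr (- (2 powr (-300))) \<le> \<alpha>" and "\<alpha> \<le> 2 powr (-30)"
  shows "t + 4 * (3 * t + d + 1) \<le> n"
proof -
  define s :: real where "s = 2 powr (-300)"
  have "2 powr (- (real n * s)) \<le> \<alpha>"
    using assms(3) unfolding s_def by (simp add: powr_realpow[symmetric] powr_powr)
  then have upper: "- (real n * s) \<le> log 2 \<alpha>"
    using assms(1) by (simp add: le_log_iff)
  have "log 2 \<alpha> \<le> -30"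
    using assms(1,4) by (simp add: log_le_iff)
  moreover have "log 2 (\<alpha> * 2 ^ (t + d)) \<le> 0"
    using assms(1,2) by (simp add: log_le_iff)
  then have "log 2 \<alpha> + (real t + real d) \<le> 0"
    using assms(1) by (simp add: log_mult log_nat_power)
  moreover have "real n * s \<le> real n / 100"
    unfolding s_def by (simp add: powr_minus powr_numeral divide_simps)
  ultimately have "real (t + 4 * (3 * t + d + 1)) \<le> real n"
    using upper by simp
  then show ?thesis by (simp only: of_nat_le_iff)
qed

lemma parameter_choice:
  fixes \<delta> \<alpha> :: real
  assumes "0 < \<delta>" "\<delta> \<le> 1" "0 < \<alpha>" "\<alpha> \<le> \<delta> / 2"
  obtains t d :: nat
  where "\<delta> * 2 ^ d \<le> 1" "1 < 2 * \<delta> * 2 ^ d" "\<alpha> * (2 ^ t * 2 ^ d) \<le> 1" "1 < 2 * \<alpha> * (2 ^ t * 2 ^ d)"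
proof -
  obtain d :: nat where d: "2 ^ d \<le> 1 / \<delta>" "1 / \<delta> < 2 ^ (d + 1)"
    using exists_power_of_two_bracket[of "1 / \<delta>"] assms(1,2) by auto
  then have d': "\<delta> * 2 ^ d \<le> 1" "1 < 2 * \<delta> * 2 ^ d"
    using assms(1) by (simp_all add: field_simps)
  have "\<alpha> * 2 ^ d \<le> \<delta> / 2 * 2 ^ d"
    using assms(4) by simp
  then have "\<alpha> * 2 ^ d \<le> 1"
    using d'(1) by linarith
  then have "1 \<le> 1 / (\<alpha> * 2 ^ d)"
    using assms(3) by simp
  then obtain t :: nat where "2 ^ t \<le> 1 / (\<alpha> * 2 ^ d)" "1 / (\<alpha> * 2 ^ d) < 2 ^ (t + 1)"
    by (rule exists_power_of_two_bracket)
  then have "\<alpha> * (2 ^ t * 2 ^ d) \<le> 1" "1 < 2 * \<alpha> * (2 ^ t * 2 ^ d)"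
    using assms(3) by (simp_all add: field_simps)
  with d' show ?thesis using that by blast
qed

lemma spectrum_size_arith:
  fixes \<delta> \<alpha> k m :: real
  assumes "0 < \<alpha>" "0 < \<delta>" "\<delta> \<le> 1 / 64" "\<delta> * m \<le> 1" "1 < 2 * \<delta> * m" "1 < 2 * \<alpha> * (k * m)"
  shows "\<delta> / (8 * \<alpha> ^ 2) \<le> k * k * (m - 1)"
proof -
  have "32 \<le> 1 / (2 * \<delta>)" "1 / (2 * \<delta>) < m"
    using assms(2,3,5) by (simp_all add: field_simps)
  then have "m \<ge> 32" by linarith
  have "1 < (2 * \<alpha> * (k * m)) ^ 2"
    using assms(6) by (simp add: one_less_power)
  also have "\<dots> = (4 * \<alpha> ^ 2 * k ^ 2 * m) * m"
    by (simp add: power_mult_distrib power2_eq_square)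
  finally have "\<delta> * m < (4 * \<alpha> ^ 2 * k ^ 2 * m) * m"
    using assms(4) by linarith
  then have "\<delta> < 4 * \<alpha> ^ 2 * k ^ 2 * m"
    using \<open>m \<ge> 32\<close> by simp
  then have "\<delta> / (8 * \<alpha> ^ 2) < k ^ 2 * m / 2"
    using assms(1) by (simp add: field_simps)
  also have "\<dots> \<le> k * k * (m - 1)"
    using mult_left_mono[of 2 m "k * k"] \<open>m \<ge> 32\<close> by (simp add: power2_eq_square algebra_simps)
  finally show ?thesis by simp
qed

lemma energy_bound_arith:
  fixes \<delta> \<alpha> k m :: real
  assumes "0 < \<alpha>" "0 < \<delta>" "0 < k" "32 * \<delta> ^ 2 \<le> \<alpha>" "\<alpha> * (k * m) \<le> 1" "1 < 2 * \<delta> * m"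
  shows "k * k * k * (k * m ^ 3 + 3 * (k * m) ^ 2) \<le> 16 * \<delta> / \<alpha> ^ 4"
proof -
  define x where "x = \<alpha> * (k * m)"
  have "0 < m" using assms(2,6) by (smt (verit) mult_nonneg_nonpos)
  then have x: "0 < x" "x \<le> 1" using assms(1,3,5) unfolding x_def by simp_all
  have inv_m: "1 / m < 2 * \<delta>" using assms(6) \<open>0 < m\<close> by (simp add: field_simps)
  have "\<alpha> ^ 4 * (k * k * k * (k * m ^ 3 + 3 * (k * m) ^ 2)) = x ^ 4 * (1 / m) + 3 * x ^ 5 * (1 / m) ^ 3 / \<alpha>"
    using assms(1) \<open>0 < m\<close> unfolding x_def by (simp add: field_simps eval_nat_numeral)
  also have "\<dots> \<le> 1 * (2 * \<delta>) + 3 * 1 * (2 * \<delta>) ^ 3 / \<alpha>"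
    using x inv_m assms(1) \<open>0 < m\<close>
    by (intro add_mono mult_mono divide_right_mono power_le_one power_mono) auto
  finally have "\<alpha> ^ 4 * (k * k * k * (k * m ^ 3 + 3 * (k * m) ^ 2)) \<le> 2 * \<delta> + 3 * (2 * \<delta>) ^ 3 / \<alpha>"
    by simp
  moreover have "(2 * \<delta>) ^ 3 / \<alpha> \<le> \<delta> / 4"
    using assms(1,2,4) by (simp add: field_simps power3_eq_cube power2_eq_square)
  ultimately have "\<alpha> ^ 4 * (k * k * k * (k * m ^ 3 + 3 * (k * m) ^ 2)) \<le> 16 * \<delta>"
    using assms(2) by linarith
  then show ?thesis
    using assms(1) by (simp add: field_simps)
qed

theorem theorem28:
  fixes n :: nat and \<delta> \<alpha> :: real
  assumes "n \<ge> 1"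
    and "0 < \<delta>" "\<delta> \<le> 1" "0 < \<alpha>" "\<alpha> \<le> 1"
    and "32 * \<delta>^2 \<le> \<alpha>" "\<alpha> \<le> \<delta> / 2"
    and "\<alpha> \<ge> (2 ^ n :: real) powr (- (2 powr (-300)))"
    and "\<alpha> \<le> 2 powr (-30)"
    and "\<delta> / \<alpha> * log 2 (1 / (2 * \<alpha>))
           \<ge> 400 * log 2 (2 ^ n) * log 2 (8 * log 2 (2 ^ n))"
  shows "\<exists>A \<subseteq> cube n.
           \<delta> * 2 ^ n \<le> real (card A) \<and> real (card A) \<le> 8 * \<delta> * 2 ^ n \<and>
           real (card (large_spec n \<alpha> A)) \<ge> \<delta> / (8 * \<alpha>^2) \<and>
           real (T2 (large_spec n \<alpha> A)) \<le> 16 * \<delta> / \<alpha>^4"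
proof -
  have "32 * \<delta> * \<delta> \<le> \<delta> / 2" using assms(6,7) by (simp add: power2_eq_square)
  then have "\<delta> \<le> 1 / 64" using assms(2) by simp
  obtain t d :: nat where d: "\<delta> * 2 ^ d \<le> 1" "1 < 2 * \<delta> * 2 ^ d"
    and t: "\<alpha> * (2 ^ t * 2 ^ d) \<le> 1" "1 < 2 * \<alpha> * (2 ^ t * 2 ^ d)"
    using parameter_choice[OF assms(2,3,4,7)] by blast
  have "t + 4 * (3 * t + d + 1) \<le> n"
    using t(1) by (intro dimension_bound[OF assms(4) _ assms(8,9)]) (simp add: power_add)
  then interpret moment_construction t d n by unfold_locales
  show ?thesis
  proof (intro exI[of _ W_perp] conjI)
    show "W_perp \<subseteq> cube n" by (rule W_perp_subset_cube)
    show "\<delta> * 2 ^ n \<le> real (card W_perp)" "real (card W_perp) \<le> 8 * \<delta> * 2 ^ n"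
      using d by (simp_all add: card_W_perp field_simps)
    show "\<delta> / (8 * \<alpha>^2) \<le> real (card (large_spec n \<alpha> W_perp))"
      using spectrum_size_arith[OF assms(4,2) \<open>\<delta> \<le> 1 / 64\<close> d t(2)]
        large_spec_W_perp_bounds(1)[OF assms(4) t(1)] by (simp add: mult.assoc)
    show "real (T2 (large_spec n \<alpha> W_perp)) \<le> 16 * \<delta> / \<alpha>^4"
      using energy_bound_arith[OF assms(4,2) _ assms(6) t(1) d(2)] large_spec_W_perp_bounds(2)[OF assms(4) t(1)]
      by simp
  qed
qed

end
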